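(* Let $l$ be a prime, $\tilde\chi$ a Dirichlet character modulo $l$ with associated character $\chi$, and $f\in S_2^k(\Gamma_0^{(2)}(l),\chi)$. Let $s$ be a symmetric positive definite integral $2\times2$ matrix with $l'=\det(s)$, and let $\hat l$ be an integer with $l\hat l\equiv 1\pmod{l'}$. Let $W_{l'}=\begin{pmatrix}l'&-\hat l\\ ll'&1-l\hat l\end{pmatrix}$. Then \[\phi_s^*(f)\,|\,W_{l'}=\chi\bigl(\det((1-l\hat l)s^{-1})\bigr)\,\phi_s^*f.\]
   Context: $\Gamma_0^{(2)}(l)=\{\begin{pmatrix}A&B\\C&D\end{pmatrix}\in \mathrm{Sp}_4(\mathbb{Z}) : C\equiv 0 \pmod l\}$; for $M=\begin{pmatrix}A&B\\C&D\end{pmatrix}$, $F|_kM(Z)=\det(CZ+D)^{-k}F((AZ+B)(CZ+D)^{-1})$ on the genus 2 Siegel upper half space; $\chi(M)=\tilde\chi(\det D)$, and for an integer $n$ (here $\det((1-l\hat l)s^{-1})=(1-l\hat l)^2/l'$, an integer) $\chi(n)=\tilde\chi(n)$. $S_2^k(\Gamma_0^{(2)}(l),\chi)$ is the space of Siegel cusp forms of degree 2, weight $k$ with $f|_kM=\chi(M)f$ for all $M\in\Gamma_0^{(2)}(l)$. The restriction is $\phi_s^*(f)(\tau)=f(s\tau)$, an elliptic cusp form of weight $2k$ and level $ll'$. For $\gamma=\begin{pmatrix}a&b\\c&d\end{pmatrix}\in\mathrm{GL}_2^+(\mathbb{Q})$, $(g|\gamma)(\tau)=\det(\gamma)^k(c\tau+d)^{-2k}g(\gamma\tau)$.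 *)

theory Defs
  imports "HOL-Analysis.Analysis" "HOL-Number_Theory.Cong"
begin

definition cmat :: "int^2^2 \<Rightarrow> complex^2^2" where
  "cmat A = (\<chi> i j. of_int (A$i$j))"

definition rmat :: "int^2^2 \<Rightarrow> real^2^2" where
  "rmat A = (\<chi> i j. of_int (A$i$j))"

definition pos_def_real :: "real^2^2 \<Rightarrow> bool" where
  "pos_def_real S \<longleftrightarrow> transpose S = S \<and> (\<forall>x. x \<noteq> 0 \<longrightarrow> x \<bullet> (S *v x) > 0)"

definition Im_mat :: "complex^2^2 \<Rightarrow> real^2^2" where
  "Im_mat Z = (\<chi> i j. Im (Z$i$j))"

definition siegel_H2 :: "(complex^2^2) set" where
  "siegel_H2 = {Z. transpose Z = Z \<and> pos_def_real (Im_mat Z)}"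

definition sym_mat :: "complex \<Rightarrow> complex \<Rightarrow> complex \<Rightarrow> complex^2^2" where
  "sym_mat a b c = vector [vector [a, b], vector [b, c]]"

text \<open>Elements of Sp_4(Z) as block quadruples (A,B,C,D); the conditions are
  M^T J M = J written out in blocks.\<close>
definition sp4Z :: "((int^2^2) \<times> (int^2^2) \<times> (int^2^2) \<times> (int^2^2)) set" where
  "sp4Z = {(A,B,C,D). transpose A ** C = transpose C ** A \<and>
                      transpose B ** D = transpose D ** B \<and>
                      transpose A ** D - transpose C ** B = mat 1}"

definition Gamma0_2 :: "int \<Rightarrow> ((int^2^2) \<times> (int^2^2) \<times> (int^2^2) \<times> (int^2^2)) set" where
  "Gamma0_2 l = {(A,B,C,D) \<in> sp4Z. \<forall>i j. l dvd C$i$j}"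

definition slash2 :: "nat \<Rightarrow> (int^2^2) \<times> (int^2^2) \<times> (int^2^2) \<times> (int^2^2)
     \<Rightarrow> (complex^2^2 \<Rightarrow> complex) \<Rightarrow> complex^2^2 \<Rightarrow> complex" where
  "slash2 k M F Z = (case M of (A,B,C,D) \<Rightarrow>
     inverse (det (cmat C ** Z + cmat D) ^ k) *
     F ((cmat A ** Z + cmat B) ** matrix_inv (cmat C ** Z + cmat D)))"

definition dirichlet_character :: "int \<Rightarrow> (int \<Rightarrow> complex) \<Rightarrow> bool" where
  "dirichlet_character m chi \<longleftrightarrow>
     (\<forall>n. chi (n + m) = chi n) \<and> (\<forall>a b. chi (a * b) = chi a * chi b) \<and>
     chi 1 = 1 \<and> (\<forall>n. chi n = 0 \<longleftrightarrow> \<not> coprime n m)"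

text \<open>Holomorphy on H_2 in the coordinates (z11, z12, z22): continuity plus
  holomorphy in each variable separately (equivalent by Osgood's lemma).\<close>
definition siegel_holomorphic :: "(complex^2^2 \<Rightarrow> complex) \<Rightarrow> bool" where
  "siegel_holomorphic F \<longleftrightarrow>
     continuous_on {(a,b,c). sym_mat a b c \<in> siegel_H2} (\<lambda>(a,b,c). F (sym_mat a b c)) \<and>
     (\<forall>a b c. sym_mat a b c \<in> siegel_H2 \<longrightarrow>
        (\<lambda>z. F (sym_mat z b c)) field_differentiable at a \<and>
        (\<lambda>z. F (sym_mat a z c)) field_differentiable at b \<and>
        (\<lambda>z. F (sym_mat a b z)) field_differentiable at c)"

text \<open>S_2^k(Gamma_0^(2)(l), chi): holomorphic, transformation law with
  chi(M) = tchi(det D), and cuspidal: Siegel's Phi operator kills F|_k M for every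
  M in Sp_4(Z).\<close>
definition siegel_cusp_forms :: "nat \<Rightarrow> int \<Rightarrow> (int \<Rightarrow> complex) \<Rightarrow> (complex^2^2 \<Rightarrow> complex) set" where
  "siegel_cusp_forms k l tchi = {F.
     siegel_holomorphic F \<and>
     (\<forall>A B C D. (A,B,C,D) \<in> Gamma0_2 l \<longrightarrow>
        (\<forall>Z\<in>siegel_H2. slash2 k (A,B,C,D) F Z = tchi (det D) * F Z)) \<and>
     (\<forall>M\<in>sp4Z. \<forall>\<tau>. Im \<tau> > 0 \<longrightarrow>
        ((\<lambda>t::real. slash2 k M F (sym_mat \<tau> 0 (\<i> * of_real t))) \<longlongrightarrow> 0) at_top)}"

definition phi_s :: "int^2^2 \<Rightarrow> (complex^2^2 \<Rightarrow> complex) \<Rightarrow> complex \<Rightarrow> complex" where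
  "phi_s s F \<tau> = F (\<chi> i j. \<tau> * of_int (s$i$j))"

definition ell_slash :: "nat \<Rightarrow> int \<times> int \<times> int \<times> int \<Rightarrow> (complex \<Rightarrow> complex) \<Rightarrow> complex \<Rightarrow> complex" where
  "ell_slash k \<gamma> g \<tau> = (case \<gamma> of (a,b,c,d) \<Rightarrow>
     of_int (a*d - b*c) ^ k * inverse ((of_int c * \<tau> + of_int d) ^ (2*k)) *
     g ((of_int a * \<tau> + of_int b) / (of_int c * \<tau> + of_int d)))"

end

(* Write s = (a b; b c), l' = det s and 1 - l lhat = l' e. There is an M = (A B; C D)
   in Gamma_0^(2)(l), built from s, l, lhat and e, which maps the point s tau of the
   Siegel upper half space to s (W_l' tau) with automorphy factor
   det(C s tau + D) = l' (l tau + e)^2; the key identity is s J s = l' J for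
   J = (0 1; -1 0). So the elliptic slash operator by W_l' on phi_s^* f is the
   Siegel slash operator by M on f evaluated at s tau, and the transformation law
   of f supplies the factor chi(det D) = chi(l' e^2). *)

theory Submission imports Defs begin

definition mat2 :: "'a::zero \<Rightarrow> 'a \<Rightarrow> 'a \<Rightarrow> 'a \<Rightarrow> 'a^2^2" where
  "mat2 p q r t = vector [vector [p, q], vector [r, t]]"

lemma mat2_nth [simp]:
  "mat2 p q r t $ 1 $ 1 = p" "mat2 p q r t $ 1 $ 2 = q"
  "mat2 p q r t $ 2 $ 1 = r" "mat2 p q r t $ 2 $ 2 = t"
  by (simp_all add: mat2_def)

lemma mat2_eta: "(M::'a::zero^2^2) = mat2 (M$1$1) (M$1$2) (M$2$1) (M$2$2)"
  by (simp add: vec_eq_iff forall_2)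

lemma mat2_eq_iff:
  "mat2 p q r t = mat2 p' q' r' t' \<longleftrightarrow> p = p' \<and> q = q' \<and> r = r' \<and> t = t'"
  by (simp add: vec_eq_iff forall_2)

lemma mat2_mult:
  "(mat2 p q r t :: 'a::semiring_1^2^2) ** mat2 p' q' r' t' =
     mat2 (p*p' + q*r') (p*q' + q*t') (r*p' + t*r') (r*q' + t*t')"
  by (simp add: vec_eq_iff forall_2 matrix_matrix_mult_def sum_2)

lemma mat2_add:
  "(mat2 p q r t :: 'a::monoid_add^2^2) + mat2 p' q' r' t' = mat2 (p+p') (q+q') (r+r') (t+t')"
  by (simp add: vec_eq_iff forall_2)

lemma mat2_diff:
  "(mat2 p q r t :: 'a::group_add^2^2) - mat2 p' q' r' t' = mat2 (p-p') (q-q') (r-r') (t-t')"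
  by (simp add: vec_eq_iff forall_2)

lemma transpose_mat2: "transpose (mat2 p q r t) = mat2 p r q t"
  by (simp add: vec_eq_iff forall_2 transpose_def)

lemma mat_1_eq_mat2: "(mat 1 :: 'a::{zero,one}^2^2) = mat2 1 0 0 1"
  by (simp add: vec_eq_iff forall_2 mat_def)

lemma det_mat2: "det (mat2 p q r t :: 'a::comm_ring_1^2^2) = p*t - q*r"
  by (simp add: det_2)

lemma cmat_mat2: "cmat (mat2 p q r t) = mat2 (of_int p) (of_int q) (of_int r) (of_int t)"
  by (simp add: cmat_def vec_eq_iff forall_2)

lemma rmat_mat2: "rmat (mat2 p q r t) = mat2 (of_int p) (of_int q) (of_int r) (of_int t)"
  by (simp add: rmat_def vec_eq_iff forall_2)

lemma sym_mat_eq_mat2: "sym_mat x y z = mat2 x y y z"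
  by (simp add: sym_mat_def mat2_def)

lemma inner_mat2_mult:
  "(x::real^2) \<bullet> (mat2 p q r t *v x) = x$1 * (p*x$1 + q*x$2) + x$2 * (r*x$1 + t*x$2)"
  by (simp add: inner_vec_def sum_2 matrix_vector_mult_def)

lemma symmetric_mat2_cases:
  fixes s :: "'a::zero^2^2"
  assumes "transpose s = s"
  obtains a b c where "s = mat2 a b b c"
proof
  have "s$2$1 = s$1$2"
    using assms by (metis transpose_mat2 mat2_eta mat2_eq_iff)
  then show "s = mat2 (s$1$1) (s$1$2) (s$1$2) (s$2$2)"
    by (metis mat2_eta)
qed

lemma pos_def_real_mat2_det_pos:
  assumes "pos_def_real (mat2 a b b c)"
  shows "0 < det (mat2 a b b c)"
proof -
  have quad_pos: "0 < x \<bullet> (mat2 a b b c *v x)" if "x \<noteq> 0" for x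
    using assms that unfolding pos_def_real_def by blast
  have "0 < a"
    using quad_pos[of "vector [1, 0]"] by (simp add: inner_mat2_mult vec_eq_iff forall_2)
  moreover have "0 < a * (a*c - b*b)"
    using quad_pos[of "vector [b, -a]"] \<open>0 < a\<close>
    by (simp add: inner_mat2_mult vec_eq_iff forall_2 algebra_simps)
  ultimately show ?thesis
    by (simp add: det_mat2 zero_less_mult_iff)
qed

lemma pos_def_rmat_det_pos:
  assumes "transpose s = s" and "pos_def_real (rmat s)"
  shows "0 < det s"
proof -
  obtain a b c where s: "s = mat2 a b b c"
    using assms(1) by (rule symmetric_mat2_cases)
  have "0 < det (rmat s)"
    using assms(2) unfolding s rmat_mat2 by (rule pos_def_real_mat2_det_pos)
  then show ?thesis
    unfolding s rmat_mat2 det_mat2 by (simp flip: of_int_mult of_int_diff)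
qed

lemma phi_s_mat2:
  "phi_s (mat2 a b b c) F \<tau> = F (sym_mat (\<tau> * of_int a) (\<tau> * of_int b) (\<tau> * of_int c))"
  unfolding phi_s_def sym_mat_eq_mat2 by (rule arg_cong[where f = F]) (simp add: vec_eq_iff forall_2)

lemma sym_mat_in_siegel_H2:
  assumes "pos_def_real (rmat (mat2 a b b c))" and "0 < Im \<tau>"
  shows "sym_mat (\<tau> * of_int a) (\<tau> * of_int b) (\<tau> * of_int c) \<in> siegel_H2"
  unfolding siegel_H2_def pos_def_real_def
proof (intro CollectI conjI allI impI)
  let ?Z = "sym_mat (\<tau> * of_int a) (\<tau> * of_int b) (\<tau> * of_int c)"
  have Im_Z: "Im_mat ?Z = mat2 (Im \<tau> * a) (Im \<tau> * b) (Im \<tau> * b) (Im \<tau> * c)"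
    unfolding sym_mat_eq_mat2 by (simp add: Im_mat_def vec_eq_iff forall_2)
  show "transpose ?Z = ?Z"
    unfolding sym_mat_eq_mat2 transpose_mat2 ..
  show "transpose (Im_mat ?Z) = Im_mat ?Z"
    unfolding Im_Z transpose_mat2 ..
  fix x :: "real^2"
  assume "x \<noteq> 0"
  then have "0 < x \<bullet> (rmat (mat2 a b b c) *v x)"
    using assms(1) unfolding pos_def_real_def by blast
  then have "0 < Im \<tau> * (x \<bullet> (rmat (mat2 a b b c) *v x))"
    using assms(2) by simp
  also have "\<dots> = x \<bullet> (Im_mat ?Z *v x)"
    unfolding Im_Z rmat_mat2 inner_mat2_mult by (simp add: algebra_simps)
  finally show "0 < x \<bullet> (Im_mat ?Z *v x)" .
qed

lemma slash2_factor:
  assumes "cmat A ** Z + cmat B = T ** (cmat C ** Z + cmat D)"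
    and "det (cmat C ** Z + cmat D) \<noteq> 0"
  shows "slash2 k (A, B, C, D) F Z = inverse (det (cmat C ** Z + cmat D) ^ k) * F T"
proof -
  let ?X = "cmat C ** Z + cmat D"
  have "invertible ?X"
    using assms(2) invertible_det_nz by blast
  then have "?X ** matrix_inv ?X = mat 1"
    unfolding invertible_def matrix_inv_def by (rule someI2_ex) auto
  then have "(cmat A ** Z + cmat B) ** matrix_inv ?X = T"
    unfolding assms(1) by (metis matrix_mul_assoc matrix_mul_rid)
  then show ?thesis
    by (simp add: slash2_def)
qed

(* With J = (0 1; -1 0) and s = (a b; b c) this is (J adj(s), -lhat J, l J, e adj(s) J). *)
definition W_lift :: "int \<Rightarrow> int \<Rightarrow> int \<Rightarrow> int \<Rightarrow> int \<Rightarrow> int \<Rightarrow>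
    (int^2^2) \<times> (int^2^2) \<times> (int^2^2) \<times> (int^2^2)" where
  "W_lift l lhat e a b c =
     (mat2 (-b) a (-c) b, mat2 0 (-lhat) lhat 0, mat2 0 l (-l) 0, mat2 (e*b) (e*c) (-e*a) (-e*b))"

lemma W_lift_in_Gamma0_2:
  assumes "1 - l*lhat = (a*c - b*b) * e"
  shows "W_lift l lhat e a b c \<in> Gamma0_2 l"
  using assms unfolding Gamma0_2_def sp4Z_def W_lift_def
  by (simp add: mat2_mult transpose_mat2 mat2_diff mat2_add mat_1_eq_mat2 mat2_eq_iff
      forall_2 algebra_simps)

lemma slash2_W_lift_cusp_form:
  assumes "F \<in> siegel_cusp_forms k l tchi"
    and "1 - l*lhat = (a*c - b*b) * e" and "a*c - b*b \<noteq> 0"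
    and "Z \<in> siegel_H2"
  shows "slash2 k (W_lift l lhat e a b c) F Z = tchi ((1 - l*lhat)^2 div (a*c - b*b)) * F Z"
proof -
  have "(1 - l*lhat)^2 = (a*c - b*b) * ((a*c - b*b) * e^2)"
    unfolding assms(2) by (simp add: power2_eq_square)
  then have "(1 - l*lhat)^2 div (a*c - b*b) = (a*c - b*b) * e^2"
    using assms(3) by simp
  also have "\<dots> = det (mat2 (e*b) (e*c) (-e*a) (-e*b))"
    by (simp add: det_mat2 power2_eq_square algebra_simps)
  finally have "(1 - l*lhat)^2 div (a*c - b*b) = det (mat2 (e*b) (e*c) (-e*a) (-e*b))" .
  then show ?thesis
    using assms(1,4) W_lift_in_Gamma0_2[OF assms(2)]
    unfolding siegel_cusp_forms_def W_lift_def by auto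
qed

lemma slash2_W_lift_sym_mat:
  fixes a b c l lhat e :: int and \<tau> w :: complex
  defines "l' \<equiv> a*c - b*b" and "u \<equiv> of_int l * \<tau> + of_int e"
  assumes l'_nz: "l' \<noteq> 0" and u_nz: "u \<noteq> 0"
    and w: "of_int l' * u * w = of_int l' * \<tau> - of_int lhat"
  shows "slash2 k (W_lift l lhat e a b c) F (sym_mat (\<tau> * of_int a) (\<tau> * of_int b) (\<tau> * of_int c))
    = inverse ((of_int l' * u^2) ^ k) * F (sym_mat (w * of_int a) (w * of_int b) (w * of_int c))"
proof -
  let ?Z = "sym_mat (\<tau> * of_int a) (\<tau> * of_int b) (\<tau> * of_int c)"
  let ?T = "sym_mat (w * of_int a) (w * of_int b) (w * of_int c)"
  let ?X = "mat2 (u * of_int b) (u * of_int c) (- u * of_int a) (- u * of_int b)"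
  have denominator: "cmat (mat2 0 l (-l) 0) ** ?Z + cmat (mat2 (e*b) (e*c) (-e*a) (-e*b)) = ?X"
    unfolding sym_mat_eq_mat2 cmat_mat2 mat2_mult mat2_add mat2_eq_iff u_def
    by (simp add: algebra_simps)
  have det_X: "det ?X = of_int l' * u^2"
    unfolding det_mat2 l'_def by (simp add: algebra_simps power2_eq_square)
  have "cmat (mat2 (-b) a (-c) b) ** ?Z + cmat (mat2 0 (-lhat) lhat 0)
      = mat2 0 (of_int l' * \<tau> - of_int lhat) (- (of_int l' * \<tau> - of_int lhat)) 0"
    unfolding sym_mat_eq_mat2 cmat_mat2 mat2_mult mat2_add mat2_eq_iff l'_def
    by (simp add: algebra_simps)
  also have "\<dots> = ?T ** ?X"
  proof -
    have "(of_int l' :: complex) = of_int a * of_int c - of_int b * of_int b"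
      unfolding l'_def by simp
    then show ?thesis
      using w unfolding sym_mat_eq_mat2 mat2_mult mat2_eq_iff by algebra
  qed
  finally have "cmat (mat2 (-b) a (-c) b) ** ?Z + cmat (mat2 0 (-lhat) lhat 0) = ?T ** ?X" .
  then show ?thesis
    using slash2_factor[where k = k and F = F] l'_nz u_nz denominator det_X
    unfolding W_lift_def by simp
qed

lemma ell_slash_W_phi_s:
  fixes a b c l lhat e :: int and \<tau> :: complex
  defines "l' \<equiv> a*c - b*b" and "u \<equiv> of_int l * \<tau> + of_int e"
  assumes e: "1 - l*lhat = l' * e" and l'_pos: "0 < l'" and u_nz: "u \<noteq> 0"
  shows "ell_slash k (l', - lhat, l * l', 1 - l*lhat) (phi_s (mat2 a b b c) F) \<tau>
    = slash2 k (W_lift l lhat e a b c) F (sym_mat (\<tau> * of_int a) (\<tau> * of_int b) (\<tau> * of_int c))"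
proof -
  define w where "w = (of_int l' * \<tau> - of_int lhat) / (of_int l' * u)"
  have l'_nz: "(of_int l' :: complex) \<noteq> 0"
    using l'_pos by simp
  have W_denominator: "of_int (l * l') * \<tau> + of_int (1 - l*lhat) = of_int l' * u"
    unfolding e u_def by (simp add: algebra_simps)
  have W_det: "l' * (1 - l*lhat) - - lhat * (l * l') = l'"
    by (simp add: algebra_simps)
  have "ell_slash k (l', - lhat, l * l', 1 - l*lhat) (phi_s (mat2 a b b c) F) \<tau>
      = of_int l' ^ k * inverse ((of_int l' * u) ^ (2*k))
          * F (sym_mat (w * of_int a) (w * of_int b) (w * of_int c))"
    unfolding ell_slash_def phi_s_mat2 W_denominator W_det prod.case by (simp add: w_def)
  also have "\<dots> = inverse ((of_int l' * u^2) ^ k)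
          * F (sym_mat (w * of_int a) (w * of_int b) (w * of_int c))"
  proof -
    have "(of_int l' * u) ^ (2*k) = of_int l' ^ k * (of_int l' * u^2) ^ k"
      by (simp add: power_mult power_mult_distrib power2_eq_square mult_ac)
    then show ?thesis
      using l'_nz u_nz by (simp add: field_simps)
  qed
  also have "\<dots> = slash2 k (W_lift l lhat e a b c) F
      (sym_mat (\<tau> * of_int a) (\<tau> * of_int b) (\<tau> * of_int c))"
  proof -
    have "of_int l' * u * w = of_int l' * \<tau> - of_int lhat"
      unfolding w_def using l'_nz u_nz by simp
    then show ?thesis
      unfolding l'_def u_def
      by (intro slash2_W_lift_sym_mat[symmetric]) (use l'_pos u_nz in \<open>simp_all add: l'_def u_def\<close>)
  qed
  finally show ?thesis .
qed

theorem proposition4p4: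
  fixes l lhat :: int and tchi :: "int \<Rightarrow> complex" and k :: nat
    and F :: "complex^2^2 \<Rightarrow> complex" and s :: "int^2^2"
  assumes "prime l"
    and "dirichlet_character l tchi"
    and "F \<in> siegel_cusp_forms k l tchi"
    and "transpose s = s" and "pos_def_real (rmat s)"
    and "[l * lhat = 1] (mod det s)"
  shows "\<forall>\<tau>. Im \<tau> > 0 \<longrightarrow>
     ell_slash k (det s, - lhat, l * det s, 1 - l * lhat) (phi_s s F) \<tau>
       = tchi ((1 - l * lhat)^2 div det s) * phi_s s F \<tau>"
proof (intro allI impI)
  fix \<tau> :: complex
  assume "Im \<tau> > 0"
  obtain a b c where s: "s = mat2 a b b c"
    using assms(4) by (rule symmetric_mat2_cases)
  have det_pos: "0 < a*c - b*b"
    using pos_def_rmat_det_pos[OF assms(4,5)] unfolding s det_mat2 .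
  obtain e where e: "1 - l*lhat = (a*c - b*b) * e"
    using assms(6) unfolding s det_mat2 by (metis cong_iff_dvd_diff cong_sym dvdE)
  have "Im (of_int l * \<tau> + of_int e) \<noteq> 0"
    using \<open>Im \<tau> > 0\<close> \<open>prime l\<close> by auto
  then have "of_int l * \<tau> + of_int e \<noteq> 0"
    by force
  let ?Z = "sym_mat (\<tau> * of_int a) (\<tau> * of_int b) (\<tau> * of_int c)"
  have "?Z \<in> siegel_H2"
    using sym_mat_in_siegel_H2 assms(5) \<open>Im \<tau> > 0\<close> unfolding s by blast
  have "ell_slash k (det s, - lhat, l * det s, 1 - l*lhat) (phi_s s F) \<tau>
      = slash2 k (W_lift l lhat e a b c) F ?Z"
    unfolding s det_mat2 using ell_slash_W_phi_s e det_pos \<open>of_int l * \<tau> + of_int e \<noteq> 0\<close>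
    by blast
  also have "\<dots> = tchi ((1 - l*lhat)^2 div det s) * phi_s s F \<tau>"
    using slash2_W_lift_cusp_form[OF assms(3) e] det_pos \<open>?Z \<in> siegel_H2\<close>
    unfolding s det_mat2 phi_s_mat2 by simp
  finally show "ell_slash k (det s, - lhat, l * det s, 1 - l * lhat) (phi_s s F) \<tau>
      = tchi ((1 - l * lhat)^2 div det s) * phi_s s F \<tau>" .
qed

end
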